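(* Let $C$ be a curve of genus $g$ over an algebraically closed field of characteristic $p>0$, with Hasse-Witt matrix $H=(h_{i,j})_{1\le i,j\le g}$. Assume that either $H$ is diagonal, or $H$ is anti-diagonal (i.e. $h_{i,j}=0$ unless $j=g-i+1$) and for each $1\le i\le g$ either $h_{i,g-i+1}=h_{g-i+1,i}=0$ or both $h_{i,g-i+1}\neq 0$ and $h_{g-i+1,i}\neq 0$. Then $\mathrm{rank}(H)$ equals the $p$-rank of $C$. Consequently, any supersingular curve of genus $g$ whose Hasse-Witt matrix satisfies this assumption is superspecial (i.e. has $a$-number $g$).
   Context: The Hasse-Witt matrix $H$ of $C$ with respect to a basis $v_1,\dots,v_g$ of $H^1(C,\mathcal O_C)$ is defined by $(\mathrm{Frob}_C^*(v_1),\dots,\mathrm{Frob}_C^*(v_g))=(v_1,\dots,v_g)H$, where $\mathrm{Frob}_C^*$ is the $p$-linear map induced by the absolute Frobenius. The $p$-rank $f_C$ is defined by $\#J(C)[p]=p^{f_C}$ and equals $\mathrm{rank}(H H^{(p)}\cdots H^{(p^{g-1})})$, where $H^{(p^i)}$ is $H$ with entries raised to the $p^i$-th power. The $a$-number is $g-\mathrm{rank}(H)$. $C$ is superspecial if $J(C)$ is isomorphic to a product of supersingular elliptic curves (equivalently $H=0$); $C$ is supersingular if $J(C)$ is isogenous to a product of supersingular elliptic curves. *)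

theory Defs
  imports "HOL-Computational_Algebra.Polynomial" "Jordan_Normal_Form.DL_Rank"
begin

text \<open>Hasse-Witt matrices are g x g matrices (type 'a mat, indices 0..g-1) over a field.
  Entry-wise Frobenius twist H^(p^i): entries raised to the (p^i)-th power.\<close>

definition frob_twist :: "nat \<Rightarrow> nat \<Rightarrow> 'a::field mat \<Rightarrow> 'a mat" where
  "frob_twist p i H = map_mat (\<lambda>x. x ^ (p ^ i)) H"

definition hw_iterate :: "nat \<Rightarrow> nat \<Rightarrow> 'a::field mat \<Rightarrow> 'a mat" where
  "hw_iterate p g H = foldr (\<lambda>M N. M * N) (map (\<lambda>i. frob_twist p i H) [0..<g]) (1\<^sub>m g)"

definition p_rank :: "nat \<Rightarrow> nat \<Rightarrow> 'a::field mat \<Rightarrow> nat" where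
  "p_rank p g H = vec_space.rank g (hw_iterate p g H)"

definition a_number :: "nat \<Rightarrow> 'a::field mat \<Rightarrow> nat" where
  "a_number g H = g - vec_space.rank g H"

definition diagonal_hw :: "nat \<Rightarrow> 'a::field mat \<Rightarrow> bool" where
  "diagonal_hw g H \<longleftrightarrow> (\<forall>i<g. \<forall>j<g. i \<noteq> j \<longrightarrow> H $$ (i, j) = 0)"

text \<open>Anti-diagonal (1-indexed: h_{i,j} = 0 unless j = g-i+1; 0-indexed: j = g-1-i),
  with paired vanishing condition on h_{i,g-i+1} and h_{g-i+1,i}.\<close>
definition antidiagonal_paired_hw :: "nat \<Rightarrow> 'a::field mat \<Rightarrow> bool" where
  "antidiagonal_paired_hw g H \<longleftrightarrow>
     (\<forall>i<g. \<forall>j<g. j \<noteq> g - 1 - i \<longrightarrow> H $$ (i, j) = 0) \<and>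
     (\<forall>i<g. (H $$ (i, g - 1 - i) = 0 \<and> H $$ (g - 1 - i, i) = 0) \<or>
            (H $$ (i, g - 1 - i) \<noteq> 0 \<and> H $$ (g - 1 - i, i) \<noteq> 0))"

end

theory Submission
  imports Defs
begin

text \<open>Both hypotheses say that \<open>H\<close> is a monomial matrix: its nonzero entries are exactly
  those at \<open>(i, \<sigma> i)\<close> for \<open>i \<notin> Z\<close>, where \<open>\<sigma>\<close> is a permutation (the identity or
  \<open>i \<mapsto> g - 1 - i\<close>) and \<open>Z\<close> is the set of zero rows; the pairing condition makes \<open>Z\<close> stable
  under \<open>\<sigma>\<close>. Raising entries to a power keeps this zero pattern, and a product of matrices with
  a common \<open>\<sigma>\<close>-stable pattern \<open>(\<sigma>, Z)\<close> has pattern \<open>(\<sigma>\<^sup>k, Z)\<close>, as no cancellation can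
  occur. Two monomial matrices with the same zero rows are right multiples of one another and so
  have the same rank.\<close>

lemma (in vec_space) rank_mult_le:
  assumes A: "A \<in> carrier_mat n m" and B: "B \<in> carrier_mat m k"
  shows "rank (A * B) \<le> rank A"
proof -
  define W where "W = span (set (cols A))"
  have AB: "A * B \<in> carrier_mat n k" using A B by auto
  have cols_in_W: "set (cols (A * B)) \<subseteq> W"
  proof
    fix x assume "x \<in> set (cols (A * B))"
    then obtain j where j: "j < k" "x = col (A * B) j"
      using AB by (metis cols_length cols_nth in_set_conv_nth carrier_matD(2))
    then have "x = A *\<^sub>v col B j" using A B by auto
    moreover have "col B j \<in> carrier_vec (dim_col A)" using A B j by auto
    ultimately have "x \<in> col_space A" using col_space_eq[OF A] A by auto
    then show "x \<in> W" unfolding W_def col_space_def .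
  qed
  have W: "subspace class_ring W V"
    unfolding W_def using A cols_dim carrier_matD(1) span_is_subspace by metis
  then have "span (set (cols (A * B))) \<subseteq> W"
    using cols_in_W by (simp add: span_is_subset subspace_def)
  moreover have "subspace class_ring (span (set (cols (A * B)))) V"
    using AB cols_dim carrier_matD(1) span_is_subspace by metis
  ultimately have "subspace class_ring (span (set (cols (A * B)))) (vs W)"
    using nested_subspaces[OF W] by blast
  moreover have "vectorspace.fin_dim class_ring (vs W)"
    using W_def A fin_dim_span_cols by auto
  moreover have "vectorspace.fin_dim class_ring (span_vs (set (cols (A * B))))"
    using AB fin_dim_span_cols by blast
  ultimately show ?thesis
    unfolding rank_def W_def[symmetric] using vectorspace.subspace_dim[OF subspace_is_vs[OF W]]
    by auto
qed

definition monomial_pattern :: "nat \<Rightarrow> (nat \<Rightarrow> nat) \<Rightarrow> nat set \<Rightarrow> 'a::zero mat \<Rightarrow> bool" where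
  "monomial_pattern n \<sigma> Z A \<longleftrightarrow> A \<in> carrier_mat n n \<and> bij_betw \<sigma> {..<n} {..<n} \<and>
     (\<forall>i<n. \<forall>j<n. A $$ (i, j) \<noteq> 0 \<longleftrightarrow> j = \<sigma> i \<and> i \<notin> Z)"

lemma monomial_pattern_carrier: "monomial_pattern n \<sigma> Z A \<Longrightarrow> A \<in> carrier_mat n n"
  by (simp add: monomial_pattern_def)

lemma monomial_pattern_bij: "monomial_pattern n \<sigma> Z A \<Longrightarrow> bij_betw \<sigma> {..<n} {..<n}"
  by (simp add: monomial_pattern_def)

lemma monomial_pattern_lt: "monomial_pattern n \<sigma> Z A \<Longrightarrow> i < n \<Longrightarrow> \<sigma> i < n"
  unfolding monomial_pattern_def by (meson bij_betwE lessThan_iff)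

lemma monomial_pattern_entry_nonzero_iff:
  "monomial_pattern n \<sigma> Z A \<Longrightarrow> i < n \<Longrightarrow> j < n \<Longrightarrow> A $$ (i, j) \<noteq> 0 \<longleftrightarrow> j = \<sigma> i \<and> i \<notin> Z"
  by (simp add: monomial_pattern_def)

lemma monomial_pattern_map_mat:
  assumes A: "monomial_pattern n \<sigma> Z A" and f: "\<And>x. f x = 0 \<longleftrightarrow> x = 0"
  shows "monomial_pattern n \<sigma> Z (map_mat f A)"
proof -
  have "map_mat f A $$ (i, j) = f (A $$ (i, j))" if "i < n" "j < n" for i j
    using monomial_pattern_carrier[OF A] that by auto
  then show ?thesis
    using A f unfolding monomial_pattern_def by simp
qed

lemma monomial_pattern_frob_twist:
  fixes A :: "'a::field mat"
  assumes "monomial_pattern n \<sigma> Z A" and "p > 0"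
  shows "monomial_pattern n \<sigma> Z (frob_twist p k A)"
  unfolding frob_twist_def using assms by (intro monomial_pattern_map_mat) auto

lemma mult_entry_monomial_pattern:
  fixes A B :: "'a::field mat"
  assumes A: "monomial_pattern n \<sigma> Z A" and B: "B \<in> carrier_mat n m"
    and i: "i < n" and j: "j < m"
  shows "(A * B) $$ (i, j) = A $$ (i, \<sigma> i) * B $$ (\<sigma> i, j)"
proof -
  have "(A * B) $$ (i, j) = (\<Sum>k<n. A $$ (i, k) * B $$ (k, j))"
    using monomial_pattern_carrier[OF A] B i j
    by (simp add: index_mult_mat scalar_prod_def atLeast0LessThan)
  also have "\<dots> = (\<Sum>k<n. if k = \<sigma> i then A $$ (i, \<sigma> i) * B $$ (\<sigma> i, j) else 0)"
    using monomial_pattern_entry_nonzero_iff[OF A i] by (intro sum.cong) auto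
  also have "\<dots> = A $$ (i, \<sigma> i) * B $$ (\<sigma> i, j)"
    using monomial_pattern_lt[OF A i] by simp
  finally show ?thesis .
qed

lemma monomial_pattern_mult:
  fixes A B :: "'a::field mat"
  assumes A: "monomial_pattern n \<sigma> Z A" and B: "monomial_pattern n \<tau> W B"
    and U: "\<And>i. i < n \<Longrightarrow> i \<in> U \<longleftrightarrow> i \<in> Z \<or> \<sigma> i \<in> W"
  shows "monomial_pattern n (\<tau> \<circ> \<sigma>) U (A * B)"
  unfolding monomial_pattern_def
proof (intro conjI allI impI)
  show "A * B \<in> carrier_mat n n"
    using monomial_pattern_carrier[OF A] monomial_pattern_carrier[OF B] by simp
  show "bij_betw (\<tau> \<circ> \<sigma>) {..<n} {..<n}"
    using monomial_pattern_bij[OF A] monomial_pattern_bij[OF B] by (rule bij_betw_trans)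
  fix i j assume i: "i < n" and j: "j < n"
  have "(A * B) $$ (i, j) = A $$ (i, \<sigma> i) * B $$ (\<sigma> i, j)"
    using mult_entry_monomial_pattern[OF A monomial_pattern_carrier[OF B] i j] .
  then show "(A * B) $$ (i, j) \<noteq> 0 \<longleftrightarrow> j = (\<tau> \<circ> \<sigma>) i \<and> i \<notin> U"
    using monomial_pattern_entry_nonzero_iff[OF A i monomial_pattern_lt[OF A i]]
      monomial_pattern_entry_nonzero_iff[OF B monomial_pattern_lt[OF A i] j] U[OF i]
    by auto
qed

lemma monomial_pattern_prod_list:
  fixes Ms :: "'a::field mat list"
  assumes "Ms \<noteq> []" and "\<And>M. M \<in> set Ms \<Longrightarrow> monomial_pattern n \<sigma> Z M"
    and Z_stable: "\<And>i. i < n \<Longrightarrow> \<sigma> i \<in> Z \<longleftrightarrow> i \<in> Z"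
  shows "monomial_pattern n (\<sigma> ^^ length Ms) Z (foldr (*) Ms (1\<^sub>m n))"
  using assms(1,2)
proof (induction Ms)
  case Nil
  then show ?case by simp
next
  case (Cons M Ms)
  have M: "monomial_pattern n \<sigma> Z M" using Cons.prems(2) by simp
  show ?case
  proof (cases "Ms = []")
    case True
    then show ?thesis using M monomial_pattern_carrier[OF M] by simp
  next
    case False
    then have "monomial_pattern n (\<sigma> ^^ length Ms \<circ> \<sigma>) Z (M * foldr (*) Ms (1\<^sub>m n))"
      using Cons by (intro monomial_pattern_mult[OF M]) (auto simp: Z_stable)
    then show ?thesis by (simp add: funpow_Suc_right o_def del: funpow.simps)
  qed
qed

lemma rank_le_monomial_pattern:
  fixes A B :: "'a::field mat"
  assumes A: "monomial_pattern n \<sigma> Z A" and B: "B \<in> carrier_mat n m"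
    and B_zero_rows: "\<And>i j. i < n \<Longrightarrow> j < m \<Longrightarrow> i \<in> Z \<Longrightarrow> B $$ (i, j) = 0"
  shows "vec_space.rank n B \<le> vec_space.rank n A"
proof -
  define \<rho> where "\<rho> = the_inv_into {..<n} \<sigma>"
  have inj: "inj_on \<sigma> {..<n}" using monomial_pattern_bij[OF A] by (rule bij_betw_imp_inj_on)
  have \<rho>_\<sigma>: "\<rho> (\<sigma> i) = i" if "i < n" for i
    unfolding \<rho>_def using inj that by (simp add: the_inv_into_f_f)
  define Q where "Q = mat n m (\<lambda>(k, j). B $$ (\<rho> k, j) / A $$ (\<rho> k, k))"
  have Q: "Q \<in> carrier_mat n m" unfolding Q_def by simp
  have "A * Q = B"
  proof (rule eq_matI)
    fix i j assume "i < dim_row B" and "j < dim_col B"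
    then have i: "i < n" and j: "j < m" using B by auto
    have "(A * Q) $$ (i, j) = A $$ (i, \<sigma> i) * (B $$ (i, j) / A $$ (i, \<sigma> i))"
      using mult_entry_monomial_pattern[OF A Q i j] monomial_pattern_lt[OF A i] j \<rho>_\<sigma>[OF i]
      by (simp add: Q_def)
    also have "\<dots> = B $$ (i, j)"
      using monomial_pattern_entry_nonzero_iff[OF A i monomial_pattern_lt[OF A i]]
        B_zero_rows[OF i j] by auto
    finally show "(A * Q) $$ (i, j) = B $$ (i, j)" .
  qed (use B Q monomial_pattern_carrier[OF A] in auto)
  then show ?thesis
    using vec_space.rank_mult_le[OF monomial_pattern_carrier[OF A] Q] by simp
qed

lemma rank_eq_monomial_pattern:
  fixes A B :: "'a::field mat"
  assumes A: "monomial_pattern n \<sigma> Z A" and B: "monomial_pattern n \<tau> Z B"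
  shows "vec_space.rank n A = vec_space.rank n B"
proof (rule antisym)
  show "vec_space.rank n A \<le> vec_space.rank n B"
    using B monomial_pattern_carrier[OF A] monomial_pattern_entry_nonzero_iff[OF A]
    by (intro rank_le_monomial_pattern) auto
  show "vec_space.rank n B \<le> vec_space.rank n A"
    using A monomial_pattern_carrier[OF B] monomial_pattern_entry_nonzero_iff[OF B]
    by (intro rank_le_monomial_pattern) auto
qed

lemma rank_eq_p_rank_monomial_pattern:
  fixes H :: "'a::field mat"
  assumes "p > 0" and H: "monomial_pattern g \<sigma> Z H"
    and Z_stable: "\<And>i. i < g \<Longrightarrow> \<sigma> i \<in> Z \<longleftrightarrow> i \<in> Z"
  shows "vec_space.rank g H = p_rank p g H"
proof (cases "g = 0")
  case True
  then have "H = hw_iterate p g H"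
    using monomial_pattern_carrier[OF H] by (intro eq_matI) (auto simp: hw_iterate_def)
  then show ?thesis by (simp add: p_rank_def)
next
  case False
  have "monomial_pattern g (\<sigma> ^^ g) Z (hw_iterate p g H)"
    using monomial_pattern_prod_list[of "map (\<lambda>i. frob_twist p i H) [0..<g]"]
      False monomial_pattern_frob_twist[OF H \<open>p > 0\<close>] Z_stable
    by (auto simp: hw_iterate_def)
  then show ?thesis unfolding p_rank_def by (rule rank_eq_monomial_pattern[OF H])
qed

lemma monomial_pattern_diagonal_hw:
  assumes "H \<in> carrier_mat g g" and "diagonal_hw g H"
  shows "monomial_pattern g id {i. H $$ (i, i) = 0} H"
  using assms by (auto simp: monomial_pattern_def diagonal_hw_def)

lemma monomial_pattern_antidiagonal_paired_hw:
  assumes "H \<in> carrier_mat g g" and "antidiagonal_paired_hw g H"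
  shows "monomial_pattern g (\<lambda>i. g - 1 - i) {i. H $$ (i, g - 1 - i) = 0} H"
proof -
  have "bij_betw (\<lambda>i. g - 1 - i) {..<g} {..<g}"
    by (rule bij_betw_byWitness[where f' = "\<lambda>i. g - 1 - i"]) auto
  then show ?thesis
    using assms unfolding monomial_pattern_def antidiagonal_paired_hw_def by blast
qed

theorem lemma2p13:
  fixes H :: "'a::alg_closed_field mat" and g p :: nat
  assumes "prime p" and "CHAR('a) = p"
    and "H \<in> carrier_mat g g"
    and "diagonal_hw g H \<or> antidiagonal_paired_hw g H"
  shows "vec_space.rank g H = p_rank p g H \<and> (p_rank p g H = 0 \<longrightarrow> a_number g H = g)"
proof -
  have "p > 0" using \<open>prime p\<close> prime_gt_0_nat by blast
  have "vec_space.rank g H = p_rank p g H"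
    using assms(4)
  proof
    assume "diagonal_hw g H"
    then show ?thesis
      using rank_eq_p_rank_monomial_pattern[OF \<open>p > 0\<close> monomial_pattern_diagonal_hw[OF assms(3)]]
      by simp
  next
    assume "antidiagonal_paired_hw g H"
    then show ?thesis
      using rank_eq_p_rank_monomial_pattern[OF \<open>p > 0\<close> monomial_pattern_antidiagonal_paired_hw[OF assms(3)]]
      by (auto simp: antidiagonal_paired_hw_def)
  qed
  then show ?thesis by (simp add: a_number_def)
qed

end
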